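(* Let $t$ be a ground term (well-formed tree) over a ranked alphabet in which every node has at most $k$ children, and let $t'$ be obtained from $t$ by the following procedure: chain compression for the set of unary letters of $t$; then $(\Gamma_1,\Gamma_2)$ pair compression for some partition $\Gamma_1,\Gamma_2$ of the set of unary letters of the resulting tree; then leaf compression for $(\Gamma_{\ge1},\Gamma_0)$ where $\Gamma_0$ is the set of constants and $\Gamma_{\ge1}$ the set of other letters of the current tree. Then every node of $t'$ has at most $k$ children.
   Context: A tree is well-formed if each node labelled $f$ has exactly $\mathrm{ar}(f)$ ordered children; unary letters have arity $1$, constants arity $0$. For a unary letter $a$, an $a$-maximal chain is a maximal (upward and downward) sequence of nodes labelled $a$, each the child of the previous. Chain compression for $\Gamma$: simultaneously for all $a\in\Gamma$, $\ell\ge1$, replace each $a$-maximal chain of length $\ell$ by one node labelled by a fresh unary letter $a_\ell$. $(\Gamma_1,\Gamma_2)$ pair compression (disjoint sets of unary letters): every node labelled $a\in\Gamma_1$ whose child is labelled $b\in\Gamma_2$ is merged with that child into one node labelled by a fresh unary letter $c_{ab}$. Leaf compression for $(\Gamma_{\ge1},\Gamma_0)$: every node labelled $f\in\Gamma_{\ge1}$ of arity $m$ whose children at exactly the positions $i_1<\dots<i_\ell$ are leaves labelled by constants $a_1,\dots,a_\ell\in\Gamma_0$ is relabelled by a fresh letter $f'$ of arity $m-\ell$ and these children are deleted. *)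

theory Defs
  imports Main
begin

datatype 'l rtree = Node 'l "'l rtree list"

fun label :: "'l rtree \<Rightarrow> 'l" where
  "label (Node f ts) = f"

fun wf_tree :: "('l \<Rightarrow> nat) \<Rightarrow> 'l rtree \<Rightarrow> bool" where
  "wf_tree ar (Node f ts) = (length ts = ar f \<and> (\<forall>s\<in>set ts. wf_tree ar s))"

fun children_le :: "nat \<Rightarrow> 'l rtree \<Rightarrow> bool" where
  "children_le k (Node f ts) = (length ts \<le> k \<and> (\<forall>s\<in>set ts. children_le k s))"

fun labels :: "'l rtree \<Rightarrow> 'l set" where
  "labels (Node f ts) = insert f (\<Union>s\<in>set ts. labels s)"

text \<open>Letters after one round of compression; the constructors guarantee freshness.
  ChainS a l is the letter a_l, PairS a b is c_ab, and LeafS f ps is f' where ps lists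
  the (0-based) positions and constants of the deleted leaf children.\<close>
datatype 'a sym = Orig 'a | ChainS "'a sym" nat | PairS "'a sym" "'a sym"
  | LeafS "'a sym" "(nat \<times> 'a sym) list"

fun sar :: "('a \<Rightarrow> nat) \<Rightarrow> 'a sym \<Rightarrow> nat" where
  "sar r (Orig a) = r a"
| "sar r (ChainS a l) = 1"
| "sar r (PairS a b) = 1"
| "sar r (LeafS f ps) = sar r f - length ps"

text \<open>Chain compression for all unary letters. The parameter carries the pending
  (not yet closed) maximal chain above the current node: its letter and length so far.\<close>
fun wrap_chain :: "('a sym \<times> nat) option \<Rightarrow> 'a sym rtree \<Rightarrow> 'a sym rtree" where
  "wrap_chain None t = t"
| "wrap_chain (Some (a, l)) t = Node (ChainS a l) [t]"

fun chain_go :: "('a \<Rightarrow> nat) \<Rightarrow> ('a sym \<times> nat) option \<Rightarrow> 'a sym rtree \<Rightarrow> 'a sym rtree" where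
  "chain_go r p (Node b ts) =
     (case ts of
        [c] \<Rightarrow>
          (if sar r b = 1 then
             (case p of
                None \<Rightarrow> chain_go r (Some (b, 1)) c
              | Some (a, l) \<Rightarrow>
                  (if a = b then chain_go r (Some (a, Suc l)) c
                   else Node (ChainS a l) [chain_go r (Some (b, 1)) c]))
           else wrap_chain p (Node b [chain_go r None c]))
      | _ \<Rightarrow> wrap_chain p (Node b (map (chain_go r None) ts)))"

definition chain_comp :: "('a \<Rightarrow> nat) \<Rightarrow> 'a sym rtree \<Rightarrow> 'a sym rtree" where
  "chain_comp r t = chain_go r None t"

fun pair_comp :: "'l set \<Rightarrow> 'l set \<Rightarrow> ('l \<Rightarrow> 'l \<Rightarrow> 'l) \<Rightarrow> 'l rtree \<Rightarrow> 'l rtree" where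
  "pair_comp G1 G2 c (Node a ts) =
     (case ts of
        [Node b us] \<Rightarrow>
          (if a \<in> G1 \<and> b \<in> G2 then Node (c a b) (map (pair_comp G1 G2 c) us)
           else Node a [pair_comp G1 G2 c (Node b us)])
      | _ \<Rightarrow> Node a (map (pair_comp G1 G2 c) ts))"

fun const_leaf :: "('a \<Rightarrow> nat) \<Rightarrow> 'a sym rtree \<Rightarrow> bool" where
  "const_leaf r (Node a us) = (us = [] \<and> sar r a = 0)"

fun leaf_comp :: "('a \<Rightarrow> nat) \<Rightarrow> 'a sym rtree \<Rightarrow> 'a sym rtree" where
  "leaf_comp r (Node f ts) =
     (let ps = [(i, label (ts ! i)). i \<leftarrow> [0..<length ts], const_leaf r (ts ! i)] in
      if 1 \<le> sar r f \<and> ps \<noteq> [] then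
        Node (LeafS f ps) (map (leaf_comp r) (filter (\<lambda>s. \<not> const_leaf r s) ts))
      else Node f (map (leaf_comp r) ts))"

end

theory Submission
  imports Defs
begin

text \<open>None of the three compressions ever gives a node more children than some node of
  its input had: chain compression and pair compression only relabel nodes, collapse unary
  chains or merge a unary node with its child, and leaf compression only deletes children.
  The one new node chain compression creates, the head of a compressed chain, is unary and
  stands for a unary node of the input, so the bound k is preserved.\<close>

lemma children_le_map_rtree [simp]: "children_le k (map_rtree f t) = children_le k t"
  by (induction t) auto

text \<open>A pending chain is emitted as a unary node, hence the side condition on k.\<close>

lemma children_le_chain_go:
  assumes "children_le k t" and "p \<noteq> None \<Longrightarrow> 1 \<le> k"
  shows "children_le k (chain_go r p t)"
  using assms
proof (induction t arbitrary: p)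
  case (Node b ts)
  show ?case
  proof (cases "\<exists>c. ts = [c]")
    case True
    then obtain c where ts: "ts = [c]" by blast
    with Node.prems have "1 \<le> k" "children_le k c" by auto
    then have "children_le k (chain_go r q c)" for q
      using Node.IH ts by simp
    with \<open>1 \<le> k\<close> show ?thesis using ts
      by (cases p) (auto split: prod.split)
  next
    case False
    then have "chain_go r p (Node b ts) = wrap_chain p (Node b (map (chain_go r None) ts))"
      by (auto split: list.split)
    moreover have "children_le k (chain_go r None s)" if "s \<in> set ts" for s
      using Node.IH[OF that, of None] Node.prems that by simp
    ultimately show ?thesis using Node.prems by (cases p) auto
  qed
qed

lemma children_le_chain_comp: "children_le k t \<Longrightarrow> children_le k (chain_comp r t)"
  unfolding chain_comp_def by (rule children_le_chain_go) simp_all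

lemma children_le_pair_comp: "children_le k t \<Longrightarrow> children_le k (pair_comp G1 G2 c t)"
proof (induction G1 G2 c t rule: pair_comp.induct)
  case (1 G1 G2 c a ts)
  note IH = "1.IH"
  show ?case
  proof (cases ts)
    case Nil
    with "1.prems" show ?thesis by simp
  next
    case (Cons x rest)
    obtain b us where x: "x = Node b us" by (cases x)
    show ?thesis
    proof (cases rest)
      case Nil
      with "1.prems" Cons x have "1 \<le> k" "children_le k (Node b us)" by auto
      with IH(2,3)[OF Cons x Nil] Cons x Nil show ?thesis by auto
    next
      case (Cons y rest')
      have "pair_comp G1 G2 c (Node a ts) = Node a (map (pair_comp G1 G2 c) ts)"
        using \<open>ts = x # rest\<close> x Cons by simp
      moreover have "children_le k (pair_comp G1 G2 c s)" if "s \<in> set ts" for s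
        using IH(4)[OF \<open>ts = x # rest\<close> x Cons that] "1.prems" that by simp
      ultimately show ?thesis using "1.prems" by (simp del: pair_comp.simps)
    qed
  qed
qed

lemma children_le_leaf_comp: "children_le k t \<Longrightarrow> children_le k (leaf_comp r t)"
proof (induction t)
  case (Node f ts)
  have "length (filter P ts) \<le> k" for P
    using Node.prems length_filter_le[of P ts] by (simp del: length_filter_le)
  with Node show ?case by (auto simp: Let_def)
qed

theorem lemma2p4:
  fixes r :: "'a \<Rightarrow> nat" and t :: "'a rtree" and k :: nat
    and G1 G2 :: "'a sym set"
  assumes "wf_tree r t"
    and "children_le k t"
    and "G1 \<inter> G2 = {}"
    and "G1 \<union> G2 = {f \<in> labels (chain_comp r (map_rtree Orig t)). sar r f = 1}"
  shows "children_le k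
           (leaf_comp r (pair_comp G1 G2 PairS (chain_comp r (map_rtree Orig t))))"
  using assms(2)
  by (intro children_le_leaf_comp children_le_pair_comp children_le_chain_comp) simp

end
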